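(* Let $K$ be a skew field with center $P$ and an involution, $\mathcal C$ a linear category over $P$ with involution, and $S_0$ a set of objects containing exactly one object from each pair $\{u,u^*\}$. If a representation $A$ of $\mathcal C$ over $K$ is isomorphic to a selfadjoint representation, then there exist a selfadjoint representation $B$ and an isomorphism $h:A\to B$ such that $B_v=A_v$ and $h_v=1$ for all $v\in S_0$.
   Context: $K$ has an involution $a\mapsto\bar a$. Linear category over $P$: $P$-vector-space Hom sets, bilinear composition; involution on it: $u\mapsto u^*$, $(\alpha:u\to v)\mapsto(\alpha^*:v^*\to u^* )$, $u^{**}=u\ne u^*$, $\alpha^{**}=\alpha$, $(\alpha\beta)^*=\beta^*\alpha^*$, $(\alpha a)^*=\alpha^*\bar a$. Representations: functors to finite-dimensional right $K$-spaces, finite total dimension, preserving $P$-linear combinations; morphisms: natural transformations. $V^*$: semilinear forms ($\varphi(xa)=\bar a\varphi(x)$), $A^*\varphi=\varphi A$, $V^{**}=V$. Adjoint representation: $A^\circ_u=(A_{u^*})^*$, $A^\circ_\alpha=(A_{\alpha^*})^*$; selfadjoint means $A=A^\circ$. *)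

theory Defs
  imports "Jordan_Normal_Form.Matrix"
begin

definition involution :: "('k::division_ring \<Rightarrow> 'k) \<Rightarrow> bool" where
  "involution bar \<longleftrightarrow>
     (\<forall>a b. bar (a + b) = bar a + bar b) \<and>
     (\<forall>a b. bar (a * b) = bar b * bar a) \<and>
     (\<forall>a. bar (bar a) = a)"

definition center :: "'k::division_ring set" where
  "center = {c. \<forall>x. c * x = x * c}"

text \<open>A category whose objects are the elements of type 'o and whose morphisms are the
  elements of type 'm; comp al be is the composite al be (first be, then al);
  sc al a is the scalar multiple al a (a in P); ostar, mstar is the involution.\<close>
record ('o, 'm, 'k) lincat =
  dom :: "'m \<Rightarrow> 'o"
  cod :: "'m \<Rightarrow> 'o"
  comp :: "'m \<Rightarrow> 'm \<Rightarrow> 'm"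
  ident :: "'o \<Rightarrow> 'm"
  add :: "'m \<Rightarrow> 'm \<Rightarrow> 'm"
  zero :: "'o \<Rightarrow> 'o \<Rightarrow> 'm"
  sc :: "'m \<Rightarrow> 'k \<Rightarrow> 'm"
  ostar :: "'o \<Rightarrow> 'o"
  mstar :: "'m \<Rightarrow> 'm"

definition parallel :: "('o, 'm, 'k) lincat \<Rightarrow> 'm \<Rightarrow> 'm \<Rightarrow> bool" where
  "parallel C al be \<longleftrightarrow> dom C al = dom C be \<and> cod C al = cod C be"

definition lincat_inv :: "('k::division_ring \<Rightarrow> 'k) \<Rightarrow> ('o, 'm, 'k) lincat \<Rightarrow> bool" where
  "lincat_inv bar C \<longleftrightarrow>
    \<comment> \<open>category\<close>
    (\<forall>u. dom C (ident C u) = u \<and> cod C (ident C u) = u) \<and>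
    (\<forall>al. comp C al (ident C (dom C al)) = al \<and> comp C (ident C (cod C al)) al = al) \<and>
    (\<forall>al be. dom C al = cod C be \<longrightarrow>
        dom C (comp C al be) = dom C be \<and> cod C (comp C al be) = cod C al) \<and>
    (\<forall>al be ga. dom C al = cod C be \<longrightarrow> dom C be = cod C ga \<longrightarrow>
        comp C (comp C al be) ga = comp C al (comp C be ga)) \<and>
    \<comment> \<open>Hom(u,v) is an abelian group\<close>
    (\<forall>u v. dom C (zero C u v) = u \<and> cod C (zero C u v) = v) \<and>
    (\<forall>al be. parallel C al be \<longrightarrow> parallel C (add C al be) al) \<and>
    (\<forall>al be. parallel C al be \<longrightarrow> add C al be = add C be al) \<and>
    (\<forall>al be ga. parallel C al be \<longrightarrow> parallel C al ga \<longrightarrow>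
        add C (add C al be) ga = add C al (add C be ga)) \<and>
    (\<forall>al. add C al (zero C (dom C al) (cod C al)) = al) \<and>
    (\<forall>al. \<exists>be. parallel C al be \<and> add C al be = zero C (dom C al) (cod C al)) \<and>
    \<comment> \<open>P-vector space structure (right scalar multiplication by elements of P)\<close>
    (\<forall>al a. a \<in> center \<longrightarrow> parallel C (sc C al a) al) \<and>
    (\<forall>al. sc C al 1 = al) \<and>
    (\<forall>al a b. a \<in> center \<longrightarrow> b \<in> center \<longrightarrow> sc C (sc C al a) b = sc C al (a * b)) \<and>
    (\<forall>al a b. a \<in> center \<longrightarrow> b \<in> center \<longrightarrow>
        sc C al (a + b) = add C (sc C al a) (sc C al b)) \<and>
    (\<forall>al be a. a \<in> center \<longrightarrow> parallel C al be \<longrightarrow>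
        sc C (add C al be) a = add C (sc C al a) (sc C be a)) \<and>
    \<comment> \<open>bilinear composition\<close>
    (\<forall>al be ga. parallel C be ga \<longrightarrow> dom C al = cod C be \<longrightarrow>
        comp C al (add C be ga) = add C (comp C al be) (comp C al ga)) \<and>
    (\<forall>al be ga. parallel C al be \<longrightarrow> dom C al = cod C ga \<longrightarrow>
        comp C (add C al be) ga = add C (comp C al ga) (comp C be ga)) \<and>
    (\<forall>al be a. a \<in> center \<longrightarrow> dom C al = cod C be \<longrightarrow>
        comp C (sc C al a) be = sc C (comp C al be) a \<and>
        comp C al (sc C be a) = sc C (comp C al be) a) \<and>
    \<comment> \<open>involution\<close>
    (\<forall>u. ostar C (ostar C u) = u \<and> ostar C u \<noteq> u) \<and>
    (\<forall>al. dom C (mstar C al) = ostar C (cod C al) \<and> cod C (mstar C al) = ostar C (dom C al)) \<and>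
    (\<forall>al. mstar C (mstar C al) = al) \<and>
    (\<forall>al be. dom C al = cod C be \<longrightarrow>
        mstar C (comp C al be) = comp C (mstar C be) (mstar C al)) \<and>
    (\<forall>al a. a \<in> center \<longrightarrow> mstar C (sc C al a) = sc C (mstar C al) (bar a))"

text \<open>Representations in coordinates: the space at object u is K^(rdim u) (column
  vectors, right K-space), a morphism al : u \<rightarrow> v acts by the matrix rmap al
  (rdim v \<times> rdim u).\<close>
record ('o, 'm, 'k) rep =
  rdim :: "'o \<Rightarrow> nat"
  rmap :: "'m \<Rightarrow> 'k mat"

definition is_rep :: "('o, 'm, 'k::division_ring) lincat \<Rightarrow> ('o, 'm, 'k) rep \<Rightarrow> bool" where
  "is_rep C A \<longleftrightarrow>
    finite {u. rdim A u \<noteq> 0} \<and>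
    (\<forall>al. rmap A al \<in> carrier_mat (rdim A (cod C al)) (rdim A (dom C al))) \<and>
    (\<forall>u. rmap A (ident C u) = 1\<^sub>m (rdim A u)) \<and>
    (\<forall>al be. dom C al = cod C be \<longrightarrow> rmap A (comp C al be) = rmap A al * rmap A be) \<and>
    (\<forall>al be. parallel C al be \<longrightarrow> rmap A (add C al be) = rmap A al + rmap A be) \<and>
    (\<forall>al a. a \<in> center \<longrightarrow> rmap A (sc C al a) = a \<cdot>\<^sub>m rmap A al)"

text \<open>Conjugate transpose = matrix of the dual map A^* in dual coordinates
  (semilinear form with coefficient vector c: x \<mapsto> \<Sum> bar x_i c_i).\<close>
definition conjT :: "('k \<Rightarrow> 'k) \<Rightarrow> 'k mat \<Rightarrow> 'k mat" where
  "conjT bar M = map_mat bar (transpose_mat M)"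

definition adjoint :: "('k \<Rightarrow> 'k) \<Rightarrow> ('o, 'm, 'k) lincat \<Rightarrow> ('o, 'm, 'k) rep \<Rightarrow> ('o, 'm, 'k) rep" where
  "adjoint bar C A = \<lparr> rdim = (\<lambda>u. rdim A (ostar C u)),
                       rmap = (\<lambda>al. conjT bar (rmap A (mstar C al))) \<rparr>"

definition selfadjoint :: "('k \<Rightarrow> 'k) \<Rightarrow> ('o, 'm, 'k) lincat \<Rightarrow> ('o, 'm, 'k) rep \<Rightarrow> bool" where
  "selfadjoint bar C A \<longleftrightarrow> A = adjoint bar C A"

definition rep_iso :: "('o, 'm, 'k::division_ring) lincat \<Rightarrow> ('o, 'm, 'k) rep \<Rightarrow> ('o, 'm, 'k) rep
     \<Rightarrow> ('o \<Rightarrow> 'k mat) \<Rightarrow> bool" where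
  "rep_iso C A B h \<longleftrightarrow>
    (\<forall>u. h u \<in> carrier_mat (rdim B u) (rdim A u) \<and> invertible_mat (h u)) \<and>
    (\<forall>al. h (cod C al) * rmap A al = rmap B al * h (dom C al))"

end

theory Submission
  imports Defs
begin

text \<open>
  Change the basis of the selfadjoint representation \<open>A'\<close> at every object u by an invertible
  matrix \<open>\<phi> u\<close> with inverse \<open>\<psi> u\<close>. The transported representation is again
  selfadjoint as soon as \<open>\<phi> u\<close> is the conjugate transpose of \<open>\<psi> (u\<^sup>*)\<close>. Because \<open>S\<^sub>0\<close>
  contains exactly one object of each pair \<open>{u, u\<^sup>*}\<close>, \<open>\<phi>\<close> may be prescribed freely on
  \<open>S\<^sub>0\<close> and is then forced on the remaining objects. Prescribing it as the inverse of the given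
  isomorphism \<open>g : A \<rightarrow> A'\<close> makes the composite isomorphism \<open>\<phi> g : A \<rightarrow> B\<close> the identity on \<open>S\<^sub>0\<close>.
\<close>

lemma involution_zero:
  assumes "involution bar" shows "bar 0 = (0::'k::division_ring)"
proof -
  have "bar (0 + 0) = bar 0 + bar 0" using assms unfolding involution_def by blast
  then show ?thesis by simp
qed

lemma involution_one:
  assumes "involution bar" shows "bar 1 = (1::'k::division_ring)"
proof -
  have mult: "bar (a * b) = bar b * bar a" and invol: "bar (bar a) = a" for a b :: 'k
    using assms unfolding involution_def by auto
  have "bar 1 \<noteq> 0" using invol[of 1] involution_zero[OF assms] by auto
  moreover have "bar 1 * bar 1 = bar 1 * 1" using mult[of 1 1] by simp
  ultimately show ?thesis by (metis mult_left_cancel)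
qed

lemma involution_sum:
  assumes "involution bar"
  shows "bar (sum f I) = (\<Sum>i\<in>I. bar (f i :: 'k::division_ring))"
  by (induction I rule: infinite_finite_induct)
    (use assms involution_zero[OF assms] in \<open>auto simp: involution_def\<close>)

lemma conjT_carrier: "M \<in> carrier_mat n m \<Longrightarrow> conjT bar M \<in> carrier_mat m n"
  unfolding conjT_def carrier_mat_def by simp

lemma conjT_conjT: "involution bar \<Longrightarrow> conjT bar (conjT bar M) = M"
  unfolding conjT_def involution_def by (intro eq_matI) auto

lemma conjT_one:
  "involution bar \<Longrightarrow> conjT bar (1\<^sub>m n) = (1\<^sub>m n :: 'k::division_ring mat)"
  unfolding conjT_def by (intro eq_matI) (auto simp: involution_zero involution_one)

lemma conjT_mult:
  assumes inv: "involution bar" and "A \<in> carrier_mat n k" and "B \<in> carrier_mat k m"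
  shows "conjT bar (A * B) = conjT bar B * (conjT bar A :: 'k::division_ring mat)"
proof -
  have "bar (a * b) = bar b * bar a" for a b using inv unfolding involution_def by auto
  then show ?thesis using assms unfolding conjT_def
    by (intro eq_matI) (auto simp: scalar_prod_def involution_sum[OF inv])
qed

lemma conjT_mult_mult:
  assumes inv: "involution bar" and P: "P \<in> carrier_mat n1 n2" and X: "X \<in> carrier_mat n2 n3"
    and Q: "Q \<in> carrier_mat n3 n4"
  shows "conjT bar (P * X * Q) = conjT bar Q * conjT bar X * (conjT bar P :: 'k::division_ring mat)"
proof -
  have "conjT bar (P * X * Q) = conjT bar Q * (conjT bar X * conjT bar P)"
    using conjT_mult[OF inv mult_carrier_mat[OF P X] Q] conjT_mult[OF inv P X] by simp
  then show ?thesis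
    using assoc_mult_mat[OF conjT_carrier[OF Q] conjT_carrier[OF X] conjT_carrier[OF P]] by simp
qed

lemma smult_mult_mat:
  assumes "A \<in> carrier_mat n k" and "B \<in> carrier_mat k m"
  shows "(a \<cdot>\<^sub>m A) * B = a \<cdot>\<^sub>m (A * (B :: 'a::semiring_0 mat))"
  using assms by (intro eq_matI) (auto simp: scalar_prod_def sum_distrib_left mult.assoc)

lemma mult_smult_center_mat:
  assumes a: "a \<in> center" and "A \<in> carrier_mat n k" and "B \<in> carrier_mat k m"
  shows "A * (a \<cdot>\<^sub>m B) = a \<cdot>\<^sub>m (A * (B :: 'k::division_ring mat))"
proof -
  have "x * (a * y) = a * (x * y)" for x y :: 'k
  proof -
    have "x * a = a * x" using a unfolding center_def by simp
    then show ?thesis by (metis mult.assoc)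
  qed
  then show ?thesis using assms
    by (intro eq_matI) (simp_all add: scalar_prod_def sum_distrib_left)
qed

lemma invertible_mat_iff:
  assumes "M \<in> carrier_mat n n"
  shows "invertible_mat M \<longleftrightarrow>
    (\<exists>M' \<in> carrier_mat n n. M * M' = 1\<^sub>m n \<and> M' * M = (1\<^sub>m n :: 'a::semiring_1 mat))"
proof
  assume "invertible_mat M"
  then obtain M' where r: "M * M' = 1\<^sub>m n" and l: "M' * M = 1\<^sub>m (dim_row M')"
    using assms unfolding invertible_mat_def inverts_mat_def by auto
  have "M' \<in> carrier_mat n n"
    using arg_cong[OF r, of dim_col] arg_cong[OF l, of dim_col] assms by auto
  with r l show "\<exists>M' \<in> carrier_mat n n. M * M' = 1\<^sub>m n \<and> M' * M = 1\<^sub>m n" by auto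
qed (use assms in \<open>auto simp: invertible_mat_def inverts_mat_def\<close>)

lemma invertible_mult_mat:
  fixes M N :: "'a::semiring_1 mat"
  assumes M: "M \<in> carrier_mat n n" and N: "N \<in> carrier_mat n n"
    and "invertible_mat M" and "invertible_mat N"
  shows "invertible_mat (M * N)"
proof -
  obtain M' N' where M': "M' \<in> carrier_mat n n" "M * M' = 1\<^sub>m n" "M' * M = 1\<^sub>m n"
    and N': "N' \<in> carrier_mat n n" "N * N' = 1\<^sub>m n" "N' * N = 1\<^sub>m n"
    using assms invertible_mat_iff by metis
  have "(M * N) * (N' * M') = M * ((N * N') * M')"
    using M N M' N' by (simp add: assoc_mult_mat[of _ n n _ n _ n, symmetric])
  also have "\<dots> = 1\<^sub>m n" using M' N' by simp
  finally have right: "(M * N) * (N' * M') = 1\<^sub>m n" .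
  have "(N' * M') * (M * N) = N' * ((M' * M) * N)"
    using M N M' N' by (simp add: assoc_mult_mat[of _ n n _ n _ n, symmetric])
  also have "\<dots> = 1\<^sub>m n" using M' N' N by simp
  finally have left: "(N' * M') * (M * N) = 1\<^sub>m n" .
  have "N' * M' \<in> carrier_mat n n" using M' N' by simp
  with right left show ?thesis
    using invertible_mat_iff[OF mult_carrier_mat[OF M N]] by blast
qed

lemma mult_mat_insert_inverse:
  fixes P X Y Q Q' P' :: "'a::semiring_1 mat"
  assumes P: "P \<in> carrier_mat n1 n1" and X: "X \<in> carrier_mat n1 n2" and Y: "Y \<in> carrier_mat n2 n3"
    and Q: "Q \<in> carrier_mat n3 n3" and Q': "Q' \<in> carrier_mat n2 n2" and P': "P' \<in> carrier_mat n2 n2"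
    and inverse: "Q' * P' = 1\<^sub>m n2"
  shows "P * (X * Y) * Q = (P * X * Q') * (P' * Y * Q)"
proof -
  have PX: "P * X \<in> carrier_mat n1 n2" and YQ: "Y * Q \<in> carrier_mat n2 n3"
    using P X Y Q by auto
  have "(P * X * Q') * (P' * Y * Q) = (P * X) * (Q' * (P' * (Y * Q)))"
    using assoc_mult_mat[OF PX Q', of "P' * Y * Q" n3] assoc_mult_mat[OF P' Y Q] P' YQ by simp
  also have "Q' * (P' * (Y * Q)) = (Q' * P') * (Y * Q)"
    by (rule assoc_mult_mat[OF Q' P' YQ, symmetric])
  also have "\<dots> = Y * Q" using inverse left_mult_one_mat[OF YQ] by simp
  also have "(P * X) * (Y * Q) = P * (X * Y) * Q"
    using assoc_mult_mat[OF PX Y Q] assoc_mult_mat[OF P X Y] by simp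
  finally show ?thesis by simp
qed

lemma lincat_inv_dom_cod:
  assumes "lincat_inv bar C"
  shows "dom C (ident C u) = u" and "cod C (ident C u) = u"
    and "dom C al = cod C be \<Longrightarrow> dom C (comp C al be) = dom C be"
    and "dom C al = cod C be \<Longrightarrow> cod C (comp C al be) = cod C al"
    and "parallel C al be \<Longrightarrow> dom C (add C al be) = dom C al"
    and "parallel C al be \<Longrightarrow> cod C (add C al be) = cod C al"
    and "a \<in> center \<Longrightarrow> dom C (sc C al a) = dom C al"
    and "a \<in> center \<Longrightarrow> cod C (sc C al a) = cod C al"
    and "dom C (mstar C al) = ostar C (cod C al)"
    and "cod C (mstar C al) = ostar C (dom C al)"
  using assms unfolding lincat_inv_def parallel_def by simp_all

lemma lincat_inv_ostar_ostar: "lincat_inv bar C \<Longrightarrow> ostar C (ostar C u) = u"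
  unfolding lincat_inv_def by simp

lemma selfadjointD:
  assumes "selfadjoint bar C A"
  shows "rdim A (ostar C u) = rdim A u" and "rmap A al = conjT bar (rmap A (mstar C al))"
proof -
  have "rdim A = (\<lambda>u. rdim A (ostar C u))" "rmap A = (\<lambda>al. conjT bar (rmap A (mstar C al)))"
    using arg_cong[OF assms[unfolded selfadjoint_def], of rdim]
      arg_cong[OF assms[unfolded selfadjoint_def], of rmap]
    unfolding adjoint_def rep.select_convs by blast+
  then show "rdim A (ostar C u) = rdim A u" and "rmap A al = conjT bar (rmap A (mstar C al))"
    by (metis fun_cong)+
qed

lemma selfadjointI:
  assumes "\<And>u. rdim A (ostar C u) = rdim A u"
    and "\<And>al. rmap A al = conjT bar (rmap A (mstar C al))"
  shows "selfadjoint bar C A"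
  unfolding selfadjoint_def adjoint_def
  by (rule rep.equality) (simp_all add: fun_eq_iff assms(1) assms(2)[symmetric])

lemma is_rep_carrier:
  "is_rep C A \<Longrightarrow> rmap A al \<in> carrier_mat (rdim A (cod C al)) (rdim A (dom C al))"
  unfolding is_rep_def by blast

lemma rep_iso_rdim:
  assumes "rep_iso C A B h"
  shows "rdim B = rdim A"
proof
  fix u
  have "h u \<in> carrier_mat (rdim B u) (rdim A u)" and "square_mat (h u)"
    using assms unfolding rep_iso_def invertible_mat_def by auto
  then show "rdim B u = rdim A u" by auto
qed

lemma rep_iso_obtain_inverse:
  assumes "rep_iso C A B h"
  obtains h' where "\<And>u. h' u \<in> carrier_mat (rdim A u) (rdim A u)"
    and "\<And>u. h u * h' u = 1\<^sub>m (rdim A u)" and "\<And>u. h' u * h u = 1\<^sub>m (rdim A u)"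
proof -
  have "h u \<in> carrier_mat (rdim A u) (rdim A u)" and "invertible_mat (h u)" for u
    using assms rep_iso_rdim[OF assms] unfolding rep_iso_def by auto
  then have "\<forall>u. \<exists>M \<in> carrier_mat (rdim A u) (rdim A u).
      h u * M = 1\<^sub>m (rdim A u) \<and> M * h u = 1\<^sub>m (rdim A u)"
    using invertible_mat_iff by blast
  then show ?thesis using that by metis
qed

lemma rep_iso_trans:
  assumes A: "is_rep C A" and B: "is_rep C B" and D: "is_rep C D"
    and g: "rep_iso C A B g" and f: "rep_iso C B D f"
  shows "rep_iso C A D (\<lambda>u. f u * g u)"
  unfolding rep_iso_def
proof (intro conjI allI)
  fix u
  have "g u \<in> carrier_mat (rdim A u) (rdim A u)" "f u \<in> carrier_mat (rdim A u) (rdim A u)"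
    and "invertible_mat (g u)" "invertible_mat (f u)"
    using f g rep_iso_rdim[OF f] rep_iso_rdim[OF g] unfolding rep_iso_def by auto
  then show "f u * g u \<in> carrier_mat (rdim D u) (rdim A u)" "invertible_mat (f u * g u)"
    using rep_iso_rdim[OF f] rep_iso_rdim[OF g] invertible_mult_mat by auto
next
  fix al
  let ?c = "cod C al" and ?d = "dom C al"
  have fc: "f ?c \<in> carrier_mat (rdim D ?c) (rdim B ?c)" and fd: "f ?d \<in> carrier_mat (rdim D ?d) (rdim B ?d)"
    and gc: "g ?c \<in> carrier_mat (rdim B ?c) (rdim A ?c)" and gd: "g ?d \<in> carrier_mat (rdim B ?d) (rdim A ?d)"
    using f g unfolding rep_iso_def by auto
  note MA = is_rep_carrier[OF A, of al] and MB = is_rep_carrier[OF B, of al]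
    and MD = is_rep_carrier[OF D, of al]
  have "f ?c * g ?c * rmap A al = f ?c * (g ?c * rmap A al)"
    using fc gc MA by (rule assoc_mult_mat)
  also have "\<dots> = (f ?c * rmap B al) * g ?d"
    using g assoc_mult_mat[OF fc MB gd] unfolding rep_iso_def by simp
  also have "\<dots> = rmap D al * (f ?d * g ?d)"
    using f assoc_mult_mat[OF MD fd gd] unfolding rep_iso_def by simp
  finally show "f ?c * g ?c * rmap A al = rmap D al * (f ?d * g ?d)" .
qed

definition base_change_rep ::
  "('o, 'm, 'k) lincat \<Rightarrow> ('o \<Rightarrow> 'k::semiring_0 mat) \<Rightarrow> ('o \<Rightarrow> 'k mat) \<Rightarrow> ('o, 'm, 'k) rep
     \<Rightarrow> ('o, 'm, 'k) rep" where
  "base_change_rep C \<phi> \<psi> A =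
     \<lparr>rdim = rdim A, rmap = (\<lambda>al. \<phi> (cod C al) * rmap A al * \<psi> (dom C al))\<rparr>"

lemma is_rep_base_change_rep:
  fixes A :: "('o, 'm, 'k::division_ring) rep"
  assumes C: "lincat_inv bar C" and A: "is_rep C A"
    and \<phi>: "\<And>u. \<phi> u \<in> carrier_mat (rdim A u) (rdim A u)"
    and \<psi>: "\<And>u. \<psi> u \<in> carrier_mat (rdim A u) (rdim A u)"
    and \<phi>\<psi>: "\<And>u. \<phi> u * \<psi> u = 1\<^sub>m (rdim A u)"
    and \<psi>\<phi>: "\<And>u. \<psi> u * \<phi> u = 1\<^sub>m (rdim A u)"
  shows "is_rep C (base_change_rep C \<phi> \<psi> A)" (is "is_rep C ?B")
proof -
  note dc = lincat_inv_dom_cod[OF C] and M = is_rep_carrier[OF A]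
  note A_rep = A[unfolded is_rep_def]
  have "rmap ?B al \<in> carrier_mat (rdim ?B (cod C al)) (rdim ?B (dom C al))" for al
    using mult_carrier_mat[OF mult_carrier_mat[OF \<phi> M[of al]] \<psi>] by (simp add: base_change_rep_def)
  moreover have "rmap ?B (ident C u) = 1\<^sub>m (rdim ?B u)" for u
    using A_rep right_mult_one_mat[OF \<phi>] \<phi>\<psi> by (simp add: base_change_rep_def dc)
  moreover have "rmap ?B (comp C al be) = rmap ?B al * rmap ?B be" if "dom C al = cod C be" for al be
    using that A_rep mult_mat_insert_inverse[OF \<phi> M[of al] _ \<psi> \<psi> \<phi> \<psi>\<phi>, of "rmap A be"] M[of be]
    by (simp add: base_change_rep_def dc)
  moreover have "rmap ?B (add C al be) = rmap ?B al + rmap ?B be" if p: "parallel C al be" for al be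
  proof -
    let ?c = "cod C al" and ?d = "dom C al"
    have X: "rmap A al \<in> carrier_mat (rdim A ?c) (rdim A ?d)"
      and Y: "rmap A be \<in> carrier_mat (rdim A ?c) (rdim A ?d)"
      using M[of al] M[of be] p unfolding parallel_def by auto
    have "\<phi> ?c * (rmap A al + rmap A be) * \<psi> ?d
        = \<phi> ?c * rmap A al * \<psi> ?d + \<phi> ?c * rmap A be * \<psi> ?d"
      using mult_add_distrib_mat[OF \<phi> X Y]
        add_mult_distrib_mat[OF mult_carrier_mat[OF \<phi> X] mult_carrier_mat[OF \<phi> Y] \<psi>] by simp
    then show ?thesis
      using A_rep p dc(5,6)[OF p] unfolding parallel_def by (simp add: base_change_rep_def)
  qed
  moreover have "rmap ?B (sc C al a) = a \<cdot>\<^sub>m rmap ?B al" if a: "a \<in> center" for al a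
  proof -
    have "\<phi> (cod C al) * (a \<cdot>\<^sub>m rmap A al) * \<psi> (dom C al)
        = a \<cdot>\<^sub>m (\<phi> (cod C al) * rmap A al * \<psi> (dom C al))"
      using mult_smult_center_mat[OF a \<phi> M[of al]]
        smult_mult_mat[OF mult_carrier_mat[OF \<phi> M[of al]] \<psi>] by simp
    then show ?thesis using A_rep a by (simp add: base_change_rep_def dc)
  qed
  ultimately show ?thesis
    using A_rep unfolding is_rep_def by (simp add: base_change_rep_def)
qed

lemma rep_iso_base_change_rep:
  fixes A :: "('o, 'm, 'k::division_ring) rep"
  assumes A: "is_rep C A"
    and \<phi>: "\<And>u. \<phi> u \<in> carrier_mat (rdim A u) (rdim A u)"
    and \<psi>: "\<And>u. \<psi> u \<in> carrier_mat (rdim A u) (rdim A u)"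
    and \<phi>\<psi>: "\<And>u. \<phi> u * \<psi> u = 1\<^sub>m (rdim A u)"
    and \<psi>\<phi>: "\<And>u. \<psi> u * \<phi> u = 1\<^sub>m (rdim A u)"
  shows "rep_iso C A (base_change_rep C \<phi> \<psi> A) \<phi>"
  unfolding rep_iso_def
proof (intro conjI allI)
  fix u
  show "\<phi> u \<in> carrier_mat (rdim (base_change_rep C \<phi> \<psi> A) u) (rdim A u)"
    using \<phi> by (simp add: base_change_rep_def)
  show "invertible_mat (\<phi> u)"
    using \<phi> \<psi> \<phi>\<psi> \<psi>\<phi> invertible_mat_iff by blast
next
  fix al
  let ?c = "cod C al" and ?d = "dom C al"
  have \<phi>X: "\<phi> ?c * rmap A al \<in> carrier_mat (rdim A ?c) (rdim A ?d)"
    by (rule mult_carrier_mat[OF \<phi> is_rep_carrier[OF A]])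
  have "\<phi> ?c * rmap A al * \<psi> ?d * \<phi> ?d = \<phi> ?c * rmap A al * (\<psi> ?d * \<phi> ?d)"
    using \<phi>X \<psi> \<phi> by (rule assoc_mult_mat)
  then show "\<phi> ?c * rmap A al = rmap (base_change_rep C \<phi> \<psi> A) al * \<phi> ?d"
    using \<psi>\<phi> right_mult_one_mat[OF \<phi>X] by (simp add: base_change_rep_def)
qed

lemma selfadjoint_base_change_rep:
  fixes A :: "('o, 'm, 'k::division_ring) rep"
  assumes bar: "involution bar" and C: "lincat_inv bar C" and A: "is_rep C A"
    and A_sa: "selfadjoint bar C A"
    and \<phi>: "\<And>u. \<phi> u \<in> carrier_mat (rdim A u) (rdim A u)"
    and \<psi>: "\<And>u. \<psi> u \<in> carrier_mat (rdim A u) (rdim A u)"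
    and \<psi>_adj: "\<And>u. conjT bar (\<psi> (ostar C u)) = \<phi> u"
  shows "selfadjoint bar C (base_change_rep C \<phi> \<psi> A)"
proof (rule selfadjointI)
  note dc = lincat_inv_dom_cod[OF C]
  have \<phi>_adj: "conjT bar (\<phi> (ostar C u)) = \<psi> u" for u
    using arg_cong[OF \<psi>_adj[of "ostar C u"], of "conjT bar"]
    by (simp add: lincat_inv_ostar_ostar[OF C] conjT_conjT[OF bar])
  fix al
  let ?c = "cod C al" and ?d = "dom C al"
  have "conjT bar (\<phi> (ostar C ?d) * rmap A (mstar C al) * \<psi> (ostar C ?c))
      = \<phi> ?c * conjT bar (rmap A (mstar C al)) * \<psi> ?d"
    using conjT_mult_mult[OF bar \<phi> _ \<psi>, of "rmap A (mstar C al)"]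
      is_rep_carrier[OF A, of "mstar C al"]
    by (simp add: dc \<psi>_adj \<phi>_adj)
  then show "rmap (base_change_rep C \<phi> \<psi> A) al
      = conjT bar (rmap (base_change_rep C \<phi> \<psi> A) (mstar C al))"
    using selfadjointD(2)[OF A_sa, of al] by (simp add: base_change_rep_def dc)
qed (simp add: base_change_rep_def selfadjointD(1)[OF A_sa])

lemma adjoint_compatible_extension:
  fixes G H :: "'o \<Rightarrow> 'k::division_ring mat"
  assumes bar: "involution bar" and \<sigma>: "\<And>u. \<sigma> (\<sigma> u) = u"
    and S0: "\<And>u. (u \<in> S0) \<noteq> (\<sigma> u \<in> S0)" and n: "\<And>u. n (\<sigma> u) = n u"
    and G: "\<And>u. G u \<in> carrier_mat (n u) (n u)" and H: "\<And>u. H u \<in> carrier_mat (n u) (n u)"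
    and GH: "\<And>u. G u * H u = 1\<^sub>m (n u)" and HG: "\<And>u. H u * G u = 1\<^sub>m (n u)"
  obtains \<phi> \<psi> where "\<And>u. \<phi> u \<in> carrier_mat (n u) (n u)" and "\<And>u. \<psi> u \<in> carrier_mat (n u) (n u)"
    and "\<And>u. \<phi> u * \<psi> u = 1\<^sub>m (n u)" and "\<And>u. \<psi> u * \<phi> u = 1\<^sub>m (n u)"
    and "\<And>u. conjT bar (\<psi> (\<sigma> u)) = \<phi> u" and "\<And>v. v \<in> S0 \<Longrightarrow> \<phi> v = G v"
proof
  define \<phi> where "\<phi> u = (if u \<in> S0 then G u else conjT bar (H (\<sigma> u)))" for u
  define \<psi> where "\<psi> u = (if u \<in> S0 then H u else conjT bar (G (\<sigma> u)))" for u
  have conjT_\<sigma>: "M \<in> carrier_mat (n (\<sigma> u)) (n (\<sigma> u)) \<Longrightarrow> conjT bar M \<in> carrier_mat (n u) (n u)" for M u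
    using conjT_carrier n by metis
  show "\<phi> u \<in> carrier_mat (n u) (n u)" "\<psi> u \<in> carrier_mat (n u) (n u)" for u
    unfolding \<phi>_def \<psi>_def using G H conjT_\<sigma> by auto
  show "\<phi> u * \<psi> u = 1\<^sub>m (n u)" "\<psi> u * \<phi> u = 1\<^sub>m (n u)" for u
  proof -
    have "conjT bar (H (\<sigma> u)) * conjT bar (G (\<sigma> u)) = 1\<^sub>m (n u)"
      "conjT bar (G (\<sigma> u)) * conjT bar (H (\<sigma> u)) = 1\<^sub>m (n u)"
      using conjT_mult[OF bar G H, symmetric] conjT_mult[OF bar H G, symmetric] GH HG
      by (simp_all add: conjT_one[OF bar] n)
    then show "\<phi> u * \<psi> u = 1\<^sub>m (n u)" "\<psi> u * \<phi> u = 1\<^sub>m (n u)"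
      unfolding \<phi>_def \<psi>_def using GH HG by auto
  qed
  show "conjT bar (\<psi> (\<sigma> u)) = \<phi> u" for u
    using S0[of u] unfolding \<phi>_def \<psi>_def by (auto simp: \<sigma> conjT_conjT[OF bar])
  show "\<phi> v = G v" if "v \<in> S0" for v
    using that unfolding \<phi>_def by simp
qed

theorem lemma6:
  fixes bar :: "'k::division_ring \<Rightarrow> 'k"
    and C :: "('o, 'm, 'k) lincat"
    and S0 :: "'o set"
    and A :: "('o, 'm, 'k) rep"
  assumes "involution bar"
    and "lincat_inv bar C"
    and "\<forall>u. (u \<in> S0) \<noteq> (ostar C u \<in> S0)"
    and "is_rep C A"
    and "\<exists>A' g. is_rep C A' \<and> selfadjoint bar C A' \<and> rep_iso C A A' g"
  shows "\<exists>B h. is_rep C B \<and> selfadjoint bar C B \<and> rep_iso C A B h \<and>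
           (\<forall>v\<in>S0. rdim B v = rdim A v \<and> h v = 1\<^sub>m (rdim A v))"
proof -
  obtain A' g where A': "is_rep C A'" and A'_sa: "selfadjoint bar C A'" and g: "rep_iso C A A' g"
    using assms(5) by blast
  have dim: "rdim A' = rdim A" by (rule rep_iso_rdim[OF g])
  obtain g' where g': "\<And>u. g' u \<in> carrier_mat (rdim A' u) (rdim A' u)"
    and gg': "\<And>u. g u * g' u = 1\<^sub>m (rdim A' u)" and g'g: "\<And>u. g' u * g u = 1\<^sub>m (rdim A' u)"
    using rep_iso_obtain_inverse[OF g] unfolding dim by metis
  have "g u \<in> carrier_mat (rdim A' u) (rdim A' u)" for u
    using g dim unfolding rep_iso_def by metis
  then obtain \<phi> \<psi> where \<phi>: "\<And>u. \<phi> u \<in> carrier_mat (rdim A' u) (rdim A' u)"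
    and \<psi>: "\<And>u. \<psi> u \<in> carrier_mat (rdim A' u) (rdim A' u)"
    and \<phi>\<psi>: "\<And>u. \<phi> u * \<psi> u = 1\<^sub>m (rdim A' u)" and \<psi>\<phi>: "\<And>u. \<psi> u * \<phi> u = 1\<^sub>m (rdim A' u)"
    and adj: "\<And>u. conjT bar (\<psi> (ostar C u)) = \<phi> u" and on_S0: "\<And>v. v \<in> S0 \<Longrightarrow> \<phi> v = g' v"
    using adjoint_compatible_extension[OF assms(1) lincat_inv_ostar_ostar[OF assms(2)], of S0 "rdim A'" g' g]
      assms(3) selfadjointD(1)[OF A'_sa] g' g'g gg' by metis
  define B where "B = base_change_rep C \<phi> \<psi> A'"
  have B: "is_rep C B" "selfadjoint bar C B" "rep_iso C A' B \<phi>"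
    unfolding B_def
    using is_rep_base_change_rep[OF assms(2) A' \<phi> \<psi> \<phi>\<psi> \<psi>\<phi>]
      selfadjoint_base_change_rep[OF assms(1,2) A' A'_sa \<phi> \<psi> adj]
      rep_iso_base_change_rep[OF A' \<phi> \<psi> \<phi>\<psi> \<psi>\<phi>] by auto
  have "rep_iso C A B (\<lambda>u. \<phi> u * g u)"
    by (rule rep_iso_trans[OF assms(4) A' B(1) g B(3)])
  moreover have "rdim B v = rdim A v \<and> \<phi> v * g v = 1\<^sub>m (rdim A v)" if "v \<in> S0" for v
    using that on_S0 g'g dim by (simp add: B_def base_change_rep_def)
  ultimately show ?thesis using B by blast
qed

end
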